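(* Let $\mathcal{H}$ be a separable infinite-dimensional complex Hilbert space, let $T\in\mathcal{B}(\mathcal{H})$ be quasinilpotent, and let $A\in\mathcal{B}(\mathcal{H})$ commute with $T$. If $x\in\mathcal{H}$ and $Ax\neq0$, then $k_{Ax}(T)\le k_x(T)$.
   Context: For quasinilpotent $T$ and $x\neq 0$, $k_x(T)=\limsup_{\lambda\to0}\frac{\ln\|(\lambda-T)^{-1}x\|}{\ln\|(\lambda-T)^{-1}\|}$. *)

theory Defs
  imports "HOL-Analysis.Analysis"
begin

class complex_hilbert = banach +
  fixes scaleC :: "complex \<Rightarrow> 'a \<Rightarrow> 'a"
    and cinner :: "'a \<Rightarrow> 'a \<Rightarrow> complex"
  assumes scaleC_add_right: "scaleC a (x + y) = scaleC a x + scaleC a y"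
    and scaleC_add_left: "scaleC (a + b) x = scaleC a x + scaleC b x"
    and scaleC_scaleC: "scaleC a (scaleC b x) = scaleC (a * b) x"
    and scaleC_one: "scaleC 1 x = x"
    and scaleR_scaleC: "scaleR r x = scaleC (complex_of_real r) x"
    and cinner_conj_sym: "cinner x y = cnj (cinner y x)"
    and cinner_add_left: "cinner (x + y) z = cinner x z + cinner y z"
    and cinner_scaleC_left: "cinner (scaleC a x) y = cnj a * cinner x y"
    and cinner_self_nonneg: "0 \<le> Re (cinner x x)"
    and cinner_self_eq_zero: "cinner x x = 0 \<longleftrightarrow> x = 0"
    and norm_eq_sqrt_cinner: "norm x = sqrt (Re (cinner x x))"

definition cinfinite_dimensional :: "'a::complex_hilbert itself \<Rightarrow> bool" where
  "cinfinite_dimensional _ \<longleftrightarrow>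
     \<not> (\<exists>F::'a set. finite F \<and> (\<forall>x. \<exists>c. x = (\<Sum>v\<in>F. scaleC (c v) v)))"

definition bounded_clinear :: "('a::complex_hilbert \<Rightarrow> 'b::complex_hilbert) \<Rightarrow> bool" where
  "bounded_clinear f \<longleftrightarrow>
     (\<forall>x y. f (x + y) = f x + f y) \<and> (\<forall>c x. f (scaleC c x) = scaleC c (f x)) \<and>
     (\<exists>K. \<forall>x. norm (f x) \<le> norm x * K)"

definition shift_op :: "complex \<Rightarrow> ('a::complex_hilbert \<Rightarrow> 'a) \<Rightarrow> 'a \<Rightarrow> 'a" where
  "shift_op l T = (\<lambda>x. scaleC l x - T x)"

definition op_invertible :: "('a::complex_hilbert \<Rightarrow> 'a) \<Rightarrow> bool" where
  "op_invertible S \<longleftrightarrow> (\<exists>R. bounded_clinear R \<and> (\<forall>x. R (S x) = x) \<and> (\<forall>x. S (R x) = x))"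

definition cspectrum :: "('a::complex_hilbert \<Rightarrow> 'a) \<Rightarrow> complex set" where
  "cspectrum T = {l. \<not> op_invertible (shift_op l T)}"

definition quasinilpotent :: "('a::complex_hilbert \<Rightarrow> 'a) \<Rightarrow> bool" where
  "quasinilpotent T \<longleftrightarrow> bounded_clinear T \<and> cspectrum T = {0}"

definition resolvent :: "('a::complex_hilbert \<Rightarrow> 'a) \<Rightarrow> complex \<Rightarrow> 'a \<Rightarrow> 'a" where
  "resolvent T l = (THE R. bounded_clinear R \<and> (\<forall>x. R (shift_op l T x) = x)
                                            \<and> (\<forall>x. shift_op l T (R x) = x))"

definition local_index :: "('a::complex_hilbert \<Rightarrow> 'a) \<Rightarrow> 'a \<Rightarrow> ereal" where
  "local_index T x = Limsup (at (0::complex))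
     (\<lambda>l. ereal (ln (norm (resolvent T l x)) / ln (onorm (resolvent T l))))"

end

theory Submission
  imports Defs
begin

text \<open>Because \<open>A\<close> commutes with \<open>T\<close>, it commutes with every resolvent, so
  \<open>\<parallel>(\<lambda> - T)\<^sup>-\<^sup>1 A x\<parallel> \<le> \<parallel>A\<parallel> \<parallel>(\<lambda> - T)\<^sup>-\<^sup>1 x\<parallel>\<close>.
  After taking logarithms the two quotients in the definition of the local index differ by at most
  \<open>ln \<parallel>A\<parallel> / ln \<parallel>(\<lambda> - T)\<^sup>-\<^sup>1\<parallel>\<close>, which tends to \<open>0\<close>: for quasinilpotent \<open>T\<close> we have
  \<open>\<parallel>(\<lambda> - T)\<^sup>-\<^sup>1\<parallel> \<ge> 1 / |\<lambda>|\<close>, since otherwise a Neumann series would invert \<open>-T\<close>.\<close>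

lemma norm_funpow_le_onorm_power:
  fixes S :: "'a::real_normed_vector \<Rightarrow> 'a"
  assumes "bounded_linear S"
  shows "norm ((S ^^ n) x) \<le> onorm S ^ n * norm x"
proof (induction n)
  case 0
  then show ?case by simp
next
  case (Suc n)
  have "norm ((S ^^ Suc n) x) \<le> onorm S * norm ((S ^^ n) x)"
    using onorm[OF assms] by simp
  also have "\<dots> \<le> onorm S * (onorm S ^ n * norm x)"
    using Suc onorm_pos_le[OF assms] by (rule mult_left_mono)
  finally show ?case by (simp add: mult.assoc)
qed

lemma neumann_series_inverse:
  fixes S :: "'a::banach \<Rightarrow> 'a"
  assumes S: "bounded_linear S" and small: "onorm S < 1"
  obtains Q where "\<And>x. norm (Q x) \<le> norm x / (1 - onorm S)"
    and "\<And>x. Q (x - S x) = x" and "\<And>x. Q x - S (Q x) = x"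
proof -
  interpret S: bounded_linear S by fact
  let ?s = "onorm S"
  have s_nonneg: "0 \<le> ?s" using onorm_pos_le[OF S] .
  have geometric: "summable (\<lambda>n. ?s ^ n * norm x)" for x
    using small s_nonneg by (intro summable_mult2 summable_geometric) simp
  have summable: "summable (\<lambda>n. (S ^^ n) x)" for x
    by (rule summable_comparison_test'[OF geometric norm_funpow_le_onorm_power[OF S]])
  define Q where "Q x = (\<Sum>n. (S ^^ n) x)" for x
  have "norm (Q x) \<le> (\<Sum>n. ?s ^ n * norm x)" for x
    unfolding Q_def by (rule norm_suminf_le[OF norm_funpow_le_onorm_power[OF S] geometric])
  also have "(\<Sum>n. ?s ^ n * norm x) = norm x / (1 - ?s)" for x
    using small s_nonneg by (simp add: suminf_mult2[symmetric] suminf_geometric summable_geometric)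
  finally have bound: "norm (Q x) \<le> norm x / (1 - ?s)" for x .
  have S_Q: "S (Q x) = (\<Sum>n. (S ^^ Suc n) x)" for x
    unfolding Q_def using S.suminf[OF summable] by simp
  have right_inverse: "Q x - S (Q x) = x" for x
    unfolding S_Q using suminf_split_head[OF summable, of x] by (simp add: Q_def)
  have "(S ^^ n) (S x) = (S ^^ Suc n) x" for n x
    by (simp only: funpow_Suc_right comp_def)
  then have Q_S: "Q (S x) = S (Q x)" for x
    unfolding Q_def using S.suminf[OF summable, of x] by simp
  have funpow_diff: "(S ^^ n) (x - y) = (S ^^ n) x - (S ^^ n) y" for n x y
    by (induction n) (auto simp: S.diff)
  have "Q (x - y) = Q x - Q y" for x y
    unfolding Q_def funpow_diff using suminf_diff[OF summable summable] by simp
  then have left_inverse: "Q (x - S x) = x" for x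
    using Q_S right_inverse by simp
  show thesis by (rule that[OF bound left_inverse right_inverse])
qed

lemma scaleC_diff_right: "scaleC c ((x::'a::complex_hilbert) - y) = scaleC c x - scaleC c y"
  using scaleC_add_right[of c "x - y" y] by (simp add: eq_diff_eq)

lemma scaleC_diff_left: "scaleC (a - b) (x::'a::complex_hilbert) = scaleC a x - scaleC b x"
  using scaleC_add_left[of "a - b" b x] by (simp add: eq_diff_eq)

lemma norm_scaleC: "norm (scaleC c (x::'a::complex_hilbert)) = cmod c * norm x"
proof -
  have real: "cinner x x = complex_of_real (Re (cinner x x))"
    using cinner_conj_sym[of x x] by (metis Reals_cnj_iff complex_is_Real_iff of_real_Re)
  have "cinner (scaleC c x) (scaleC c x) = (cnj c * c) * cnj (cinner x x)"
    by (simp add: cinner_scaleC_left cinner_conj_sym[of x "scaleC c x"])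
  also have "cnj c * c = complex_of_real ((cmod c)\<^sup>2)"
    using complex_norm_square[of c] by (simp add: mult.commute)
  also have "complex_of_real ((cmod c)\<^sup>2) * cnj (cinner x x)
      = complex_of_real ((cmod c)\<^sup>2 * Re (cinner x x))"
    by (subst real) simp
  finally show ?thesis by (simp add: norm_eq_sqrt_cinner real_sqrt_mult)
qed

lemma onorm_scaleC_le:
  fixes f :: "'a::complex_hilbert \<Rightarrow> 'b::complex_hilbert"
  assumes "bounded_linear f"
  shows "onorm (\<lambda>x. scaleC c (f x)) \<le> cmod c * onorm f"
proof (rule onorm_bound)
  show "0 \<le> cmod c * onorm f"
    using onorm_pos_le[OF assms] by simp
  show "norm (scaleC c (f x)) \<le> cmod c * onorm f * norm x" for x
    using onorm[OF assms, of x] by (simp add: norm_scaleC mult.assoc mult_left_mono)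
qed

lemma bounded_clinear_add: "bounded_clinear f \<Longrightarrow> f (x + y) = f x + f y"
  by (simp add: bounded_clinear_def)

lemma bounded_clinear_scaleC: "bounded_clinear f \<Longrightarrow> f (scaleC c x) = scaleC c (f x)"
  by (simp add: bounded_clinear_def)

lemma bounded_clinear_imp_bounded_linear:
  assumes "bounded_clinear f"
  shows "bounded_linear f"
proof -
  obtain K where "\<And>x. norm (f x) \<le> norm x * K"
    using assms by (auto simp: bounded_clinear_def)
  then show ?thesis
    using assms by (intro bounded_linear_intro)
      (auto simp: bounded_clinear_add bounded_clinear_scaleC scaleR_scaleC)
qed

lemma bounded_clinear_diff: "bounded_clinear f \<Longrightarrow> f (x - y) = f x - f y"
  using bounded_clinear_imp_bounded_linear linear_diff bounded_linear.linear by blast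

lemma bounded_clinear_zero: "bounded_clinear f \<Longrightarrow> f 0 = 0"
  using bounded_clinear_imp_bounded_linear linear_0 bounded_linear.linear by blast

lemma bounded_clinear_scaleC_comp:
  assumes f: "bounded_clinear f"
  shows "bounded_clinear (\<lambda>x. scaleC c (f x))"
proof -
  obtain K where K: "\<And>x. norm (f x) \<le> norm x * K"
    using f by (auto simp: bounded_clinear_def)
  have "norm (scaleC c (f x)) \<le> norm x * (cmod c * K)" for x
    using mult_left_mono[OF K[of x], of "cmod c"] by (simp add: norm_scaleC ac_simps)
  moreover have "scaleC c (f (x + y)) = scaleC c (f x) + scaleC c (f y)" for x y
    using f by (simp add: bounded_clinear_add scaleC_add_right)
  moreover have "scaleC c (f (scaleC b x)) = scaleC b (scaleC c (f x))" for b x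
    using f by (simp add: bounded_clinear_scaleC scaleC_scaleC mult.commute)
  ultimately show ?thesis
    unfolding bounded_clinear_def by blast
qed

lemma bounded_clinear_shift_op:
  assumes T: "bounded_clinear T"
  shows "bounded_clinear (shift_op l T)"
proof -
  obtain K where K: "\<And>x. norm (T x) \<le> norm x * K"
    using T by (auto simp: bounded_clinear_def)
  have "norm (shift_op l T x) \<le> norm x * (cmod l + K)" for x
    using norm_triangle_ineq4[of "scaleC l x" "T x"] K[of x]
    by (simp add: shift_op_def norm_scaleC algebra_simps)
  moreover have "shift_op l T (x + y) = shift_op l T x + shift_op l T y" for x y
    using T by (simp add: shift_op_def bounded_clinear_add scaleC_add_right)
  moreover have "shift_op l T (scaleC c x) = scaleC c (shift_op l T x)" for c x
    using T by (simp add: shift_op_def bounded_clinear_scaleC scaleC_diff_right scaleC_scaleC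
      mult.commute)
  ultimately show ?thesis
    unfolding bounded_clinear_def by blast
qed

lemma op_invertibleI:
  assumes S: "bounded_clinear S" and left: "\<And>x. Q (S x) = x" and right: "\<And>x. S (Q x) = x"
    and bound: "\<And>x. norm (Q x) \<le> norm x * K"
  shows "op_invertible S"
proof -
  have "Q (x + y) = Q x + Q y" for x y
    using left[of "Q x + Q y"] by (simp add: bounded_clinear_add[OF S] right)
  moreover have "Q (scaleC c x) = scaleC c (Q x)" for c x
    using left[of "scaleC c (Q x)"] by (simp add: bounded_clinear_scaleC[OF S] right)
  ultimately have "bounded_clinear Q"
    using bound by (auto simp: bounded_clinear_def)
  with left right show ?thesis by (auto simp: op_invertible_def)
qed

lemma resolvent_inverse:
  assumes "op_invertible (shift_op l T)"
  shows resolvent_bounded_clinear: "bounded_clinear (resolvent T l)"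
    and resolvent_shift_op: "resolvent T l (shift_op l T x) = x"
    and shift_op_resolvent: "shift_op l T (resolvent T l x) = x"
proof -
  let ?inverse = "\<lambda>R. bounded_clinear R \<and> (\<forall>x. R (shift_op l T x) = x)
    \<and> (\<forall>x. shift_op l T (R x) = x)"
  obtain R where "?inverse R"
    using assms by (auto simp: op_invertible_def)
  then have "\<exists>!R. ?inverse R"
  proof (rule ex1I[of _ R])
    fix R' assume "?inverse R'"
    then show "R' = R"
      using \<open>?inverse R\<close> by (metis ext)
  qed
  then have "?inverse (resolvent T l)"
    unfolding resolvent_def by (rule theI')
  then show "bounded_clinear (resolvent T l)" "resolvent T l (shift_op l T x) = x"
    "shift_op l T (resolvent T l x) = x" by auto
qed

text \<open>\<open>l - T = (m - T)(I - (m - l)(m - T)\<^sup>-\<^sup>1)\<close>, and the second factor is inverted by a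
  Neumann series.\<close>
lemma shift_op_invertible_near:
  fixes T :: "'a::complex_hilbert \<Rightarrow> 'a"
  assumes T: "bounded_clinear T" and inv: "op_invertible (shift_op m T)"
    and small: "cmod (m - l) * onorm (resolvent T m) < 1"
  shows "op_invertible (shift_op l T)"
proof -
  let ?R = "resolvent T m"
  have R: "bounded_clinear ?R"
    using inv by (rule resolvent_bounded_clinear)
  have R_linear: "bounded_linear ?R"
    using R by (rule bounded_clinear_imp_bounded_linear)
  define S where "S y = scaleC (m - l) (?R y)" for y
  have S_linear: "bounded_linear S"
    unfolding S_def[abs_def] using R
    by (intro bounded_clinear_imp_bounded_linear bounded_clinear_scaleC_comp)
  have "onorm S < 1"
    using onorm_scaleC_le[OF R_linear, of "m - l"] small by (simp add: S_def[abs_def])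
  then obtain Q where Q_bound: "\<And>y. norm (Q y) \<le> norm y / (1 - onorm S)"
    and Q_left: "\<And>y. Q (y - S y) = y" and Q_right: "\<And>y. Q y - S (Q y) = y"
    using neumann_series_inverse[OF S_linear] by blast
  have factor: "shift_op l T y = shift_op m T (y - S y)" for y
    using bounded_clinear_shift_op[OF T, of m]
    by (simp add: S_def bounded_clinear_diff bounded_clinear_scaleC shift_op_resolvent[OF inv])
      (simp add: shift_op_def scaleC_diff_left)
  show ?thesis
  proof (rule op_invertibleI)
    show "bounded_clinear (shift_op l T)"
      using T by (rule bounded_clinear_shift_op)
    show "Q (?R (shift_op l T y)) = y" for y
      by (simp add: factor resolvent_shift_op[OF inv] Q_left)
    show "shift_op l T (Q (?R y)) = y" for y
      by (simp add: factor Q_right shift_op_resolvent[OF inv])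
    show "norm (Q (?R y)) \<le> norm y * (onorm ?R / (1 - onorm S))" for y
    proof -
      have "norm (Q (?R y)) \<le> norm (?R y) / (1 - onorm S)"
        by (rule Q_bound)
      also have "\<dots> \<le> onorm ?R * norm y / (1 - onorm S)"
        using onorm[OF R_linear, of y] \<open>onorm S < 1\<close> by (simp add: divide_right_mono)
      finally show ?thesis by (simp add: mult.commute)
    qed
  qed
qed

lemma quasinilpotent_shift_op_invertible:
  assumes "quasinilpotent T" and "l \<noteq> 0"
  shows "op_invertible (shift_op l T)"
  using assms by (auto simp: quasinilpotent_def cspectrum_def)

lemma quasinilpotent_resolvent_norm_ge:
  assumes q: "quasinilpotent T" and l: "l \<noteq> 0"
  shows "1 \<le> cmod l * onorm (resolvent T l)"
proof (rule ccontr)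
  assume "\<not> 1 \<le> cmod l * onorm (resolvent T l)"
  then have "cmod (l - 0) * onorm (resolvent T l) < 1"
    by simp
  moreover have "bounded_clinear T"
    using q by (simp add: quasinilpotent_def)
  ultimately have "op_invertible (shift_op 0 T)"
    using shift_op_invertible_near quasinilpotent_shift_op_invertible[OF q l] by blast
  with q show False
    by (auto simp: quasinilpotent_def cspectrum_def)
qed

lemma quasinilpotent_ln_onorm_resolvent_at_top:
  assumes q: "quasinilpotent T"
  shows "filterlim (\<lambda>l. ln (onorm (resolvent T l))) at_top (at 0)"
proof -
  have bound: "inverse (cmod l) \<le> onorm (resolvent T l)" if "l \<noteq> 0" for l
    using quasinilpotent_resolvent_norm_ge[OF q that] that by (simp add: field_simps)
  have "filterlim (\<lambda>l::complex. inverse (cmod l)) at_top (at 0)"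
    by (intro filterlim_inverse_at_top tendsto_norm_zero tendsto_ident_at)
      (simp add: eventually_at_filter)
  moreover from bound have "\<forall>\<^sub>F l in at 0. inverse (cmod l) \<le> onorm (resolvent T l)"
    by (auto simp: eventually_at_filter intro!: always_eventually)
  ultimately have "filterlim (\<lambda>l. onorm (resolvent T l)) at_top (at 0)"
    by (rule filterlim_at_top_mono)
  then show ?thesis
    by (rule filterlim_compose[OF ln_at_top])
qed

lemma resolvent_commute:
  assumes A: "bounded_clinear A" and comm: "A \<circ> T = T \<circ> A" and inv: "op_invertible (shift_op l T)"
  shows "resolvent T l (A x) = A (resolvent T l x)"
proof -
  have commute: "shift_op l T (A y) = A (shift_op l T y)" for y
    using A comm by (simp add: shift_op_def bounded_clinear_diff bounded_clinear_scaleC fun_eq_iff)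
  have "resolvent T l (A x) = resolvent T l (A (shift_op l T (resolvent T l x)))"
    by (simp add: shift_op_resolvent[OF inv])
  also have "\<dots> = resolvent T l (shift_op l T (A (resolvent T l x)))"
    by (simp add: commute)
  also have "\<dots> = A (resolvent T l x)"
    by (rule resolvent_shift_op[OF inv])
  finally show ?thesis .
qed

lemma resolvent_eq_zero_iff:
  assumes T: "bounded_clinear T" and inv: "op_invertible (shift_op l T)"
  shows "resolvent T l x = 0 \<longleftrightarrow> x = 0"
proof
  assume "resolvent T l x = 0"
  then have "x = shift_op l T 0"
    using shift_op_resolvent[OF inv, of x] by simp
  then show "x = 0"
    using bounded_clinear_zero[OF bounded_clinear_shift_op[OF T]] by simp
next
  assume "x = 0"
  then show "resolvent T l x = 0"
    using bounded_clinear_zero[OF resolvent_bounded_clinear[OF inv]] by simp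
qed

lemma ln_norm_le_ln_onorm_add:
  assumes f: "bounded_linear f" and nonzero: "f x \<noteq> 0"
  shows "ln (norm (f x)) \<le> ln (onorm f) + ln (norm x)"
proof -
  have pos: "0 < norm (f x)"
    using nonzero by simp
  have le: "norm (f x) \<le> onorm f * norm x"
    by (rule onorm[OF f])
  with pos have prod_pos: "0 < onorm f * norm x"
    by linarith
  then have "0 < onorm f" "0 < norm x"
    using onorm_pos_le[OF f] by (auto simp: zero_less_mult_iff)
  have "ln (norm (f x)) \<le> ln (onorm f * norm x)"
    using pos prod_pos le by simp
  also have "\<dots> = ln (onorm f) + ln (norm x)"
    using \<open>0 < onorm f\<close> \<open>0 < norm x\<close> by (simp add: ln_mult)
  finally show ?thesis .
qed

lemma Limsup_divide_at_top_le:
  fixes u v g :: "'a \<Rightarrow> real"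
  assumes g: "filterlim g at_top F" and le: "\<forall>\<^sub>F l in F. u l \<le> c + v l"
  shows "Limsup F (\<lambda>l. ereal (u l / g l)) \<le> Limsup F (\<lambda>l. ereal (v l / g l))"
proof (cases "F = bot")
  case False
  show ?thesis
  proof (rule ereal_le_epsilon2)
    fix e :: real
    assume "0 < e"
    have "\<forall>\<^sub>F l in F. max 1 (\<bar>c\<bar> / e) \<le> g l"
      using g unfolding filterlim_at_top by (rule spec)
    with le have "\<forall>\<^sub>F l in F. ereal (u l / g l) \<le> ereal e + ereal (v l / g l)"
    proof eventually_elim
      case (elim l)
      then have "0 < g l" and "\<bar>c\<bar> \<le> g l * e"
        using \<open>0 < e\<close> by (simp_all add: pos_divide_le_eq)
      moreover have "u l \<le> e * g l + v l"
        using elim(1) \<open>\<bar>c\<bar> \<le> g l * e\<close> by (simp add: abs_le_iff mult.commute)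
      ultimately show ?case
        by (simp add: field_simps)
    qed
    then have "Limsup F (\<lambda>l. ereal (u l / g l)) \<le> Limsup F (\<lambda>l. ereal e + ereal (v l / g l))"
      by (rule Limsup_mono)
    also have "\<dots> = ereal e + Limsup F (\<lambda>l. ereal (v l / g l))"
      using False by (intro Limsup_add_ereal_left) auto
    finally show "Limsup F (\<lambda>l. ereal (u l / g l)) \<le> Limsup F (\<lambda>l. ereal (v l / g l)) + ereal e"
      by (simp add: add.commute)
  qed
qed simp

theorem lemma4p7:
  fixes T A :: "'a::complex_hilbert \<Rightarrow> 'a" and x :: 'a
  assumes "separable_space (euclidean :: 'a topology)"
    and "cinfinite_dimensional TYPE('a)"
    and "quasinilpotent T"
    and "bounded_clinear A"
    and "A \<circ> T = T \<circ> A"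
    and "A x \<noteq> 0"
  shows "local_index T (A x) \<le> local_index T x"
proof -
  have T: "bounded_clinear T"
    using assms(3) by (simp add: quasinilpotent_def)
  have "ln (norm (resolvent T l (A x))) \<le> ln (onorm A) + ln (norm (resolvent T l x))"
    if "l \<noteq> 0" for l
  proof -
    have inv: "op_invertible (shift_op l T)"
      using assms(3) that by (rule quasinilpotent_shift_op_invertible)
    have "resolvent T l (A x) \<noteq> 0"
      using assms(6) by (simp add: resolvent_eq_zero_iff[OF T inv])
    then show ?thesis
      unfolding resolvent_commute[OF assms(4,5) inv]
      by (rule ln_norm_le_ln_onorm_add[OF bounded_clinear_imp_bounded_linear[OF assms(4)]])
  qed
  then have "\<forall>\<^sub>F l in at 0.
      ln (norm (resolvent T l (A x))) \<le> ln (onorm A) + ln (norm (resolvent T l x))"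
    by (auto simp: eventually_at_filter intro!: always_eventually)
  with quasinilpotent_ln_onorm_resolvent_at_top[OF assms(3)] show ?thesis
    unfolding local_index_def by (rule Limsup_divide_at_top_le)
qed

end
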